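(* Let $A,B\in M_n(\mathbb{R}_+)$ and let $C=[A,B]_\oplus = AB\oplus BA$. Suppose $AC=0$ and $BC=0$. Then for every index $t\in\{1,\dots,n\}$: (a) if $a_{it}>0$ for some $i$ (i.e. the $t$-th column of $A$ is nonzero), then the $t$-th row of $C$ is identically $0$; (b) if $b_{it}>0$ for some $i$ (i.e. the $t$-th column of $B$ is nonzero), then the $t$-th row of $C$ is identically $0$.
   Context: Max algebra: $\mathbb{R}_+$ the nonnegative reals with $a\oplus b=\max\{a,b\}$ and ordinary multiplication; for $A,B\in M_n(\mathbb{R}_+)$, $(AB)_{ij}=\max_k a_{ik}b_{kj}$ and $(A\oplus B)_{ij}=\max\{a_{ij},b_{ij}\}$. *)

theory Defs
  imports "HOL-Analysis.Analysis"
begin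

definition maxmult :: "real^'n^'n \<Rightarrow> real^'n^'n \<Rightarrow> real^'n^'n" (infixl "\<otimes>\<^sub>m" 70) where
  "A \<otimes>\<^sub>m B = (\<chi> i j. Max ((\<lambda>k. A $ i $ k * B $ k $ j) ` UNIV))"

definition maxplus :: "real^'n^'n \<Rightarrow> real^'n^'n \<Rightarrow> real^'n^'n" (infixl "\<oplus>\<^sub>m" 65) where
  "A \<oplus>\<^sub>m B = (\<chi> i j. max (A $ i $ j) (B $ i $ j))"

definition nonneg_mat :: "real^'n^'n \<Rightarrow> bool" where
  "nonneg_mat A \<longleftrightarrow> (\<forall>i j. 0 \<le> A $ i $ j)"

definition max_comm :: "real^'n^'n \<Rightarrow> real^'n^'n \<Rightarrow> real^'n^'n" where
  "max_comm A B = (A \<otimes>\<^sub>m B) \<oplus>\<^sub>m (B \<otimes>\<^sub>m A)"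

end

theory Submission
  imports Defs
begin

lemma maxmult_entry_ge: "X $ i $ k * Y $ k $ j \<le> (X \<otimes>\<^sub>m Y) $ i $ j"
  unfolding maxmult_def by (auto intro: Max_ge)

lemma nonneg_mat_maxmult:
  assumes "nonneg_mat A" "nonneg_mat B"
  shows "nonneg_mat (A \<otimes>\<^sub>m B)"
  unfolding nonneg_mat_def
proof (intro allI)
  fix i j
  have "0 \<le> A $ i $ i * B $ i $ j"
    using assms unfolding nonneg_mat_def by simp
  also have "\<dots> \<le> (A \<otimes>\<^sub>m B) $ i $ j"
    by (rule maxmult_entry_ge)
  finally show "0 \<le> (A \<otimes>\<^sub>m B) $ i $ j" .
qed

lemma nonneg_mat_maxplus:
  assumes "nonneg_mat A"
  shows "nonneg_mat (A \<oplus>\<^sub>m B)"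
  using assms unfolding nonneg_mat_def maxplus_def by (simp add: max.coboundedI1)

lemma nonneg_mat_max_comm:
  assumes "nonneg_mat A" "nonneg_mat B"
  shows "nonneg_mat (max_comm A B)"
  unfolding max_comm_def using assms by (intro nonneg_mat_maxplus nonneg_mat_maxmult)

lemma maxmult_eq_0_imp_row_eq_0:
  assumes "nonneg_mat Y" "X \<otimes>\<^sub>m Y = 0" "X $ i $ t > 0"
  shows "Y $ t $ j = 0"
proof -
  have "X $ i $ t * Y $ t $ j \<le> 0"
    using maxmult_entry_ge[of X i t Y j] assms(2) by simp
  then have "Y $ t $ j \<le> 0"
    using assms(3) by (simp add: mult_le_0_iff)
  moreover have "0 \<le> Y $ t $ j"
    using assms(1) unfolding nonneg_mat_def by simp
  ultimately show ?thesis by simp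
qed

theorem lemma3p7:
  fixes A B :: "real^'n^'n"
  assumes "nonneg_mat A" and "nonneg_mat B"
    and "A \<otimes>\<^sub>m max_comm A B = 0" and "B \<otimes>\<^sub>m max_comm A B = 0"
  shows "\<forall>t. ((\<exists>i. A $ i $ t > 0) \<longrightarrow> (\<forall>j. max_comm A B $ t $ j = 0))
            \<and> ((\<exists>i. B $ i $ t > 0) \<longrightarrow> (\<forall>j. max_comm A B $ t $ j = 0))"
proof -
  have "nonneg_mat (max_comm A B)"
    using assms(1,2) by (rule nonneg_mat_max_comm)
  then show ?thesis
    using maxmult_eq_0_imp_row_eq_0 assms(3,4) by blast
qed

end
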